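(* Fix any total budget $\mathrm{TB}\in\mathbb N_0$. For every $k\in\mathbb N$, the disjunctive sum $1/2^k+1/2^k=1/2^{k-1}$.
   Context: Game forms are defined recursively: $G=\{G^{\mathcal L}\mid G^{\mathcal R}\}$ with finite sets of Left and Right options, and finite birthday. $0=\{\varnothing\mid\varnothing\}$, $1=\{0\mid\varnothing\}$. Dyadic game forms: $1/2^0=1$ and for $k\in\mathbb N$, $1/2^k=\{0\mid 1/2^{k-1}\}$. The budget set for total budget $\mathrm{TB}$ is $\mathcal B=\{0,\dots,\mathrm{TB},\hat 0,\dots,\widehat{\mathrm{TB}}\}$: state $p$ (resp. $\hat p$) means Left holds $p$ dollars and Right holds $\mathrm{TB}-p$, and Right (resp. Left) holds the tie-breaking marker. Play of $(G,\tilde p)$: at every position (terminal ones included) both players bid simultaneously, Left $\ell\in\{0,\dots,p\}$, Right $r\in\{0,\dots,\mathrm{TB}-p\}$. If Left holds the marker (state $\hat p$): if $\ell>r$ Left moves to $(G^L,\widehat{p-\ell})$, or, including the marker (allowed when $\ell\ge r$), to $(G^L,p-\ell)$; if $\ell=r$ Left wins, the marker passes to Right, play continues at $(G^L,p-\ell)$; if $\ell<r$ Right moves to $(G^R,\widehat{p+r})$. Symmetrically when Right holds the marker (state $p$): if $r>\ell$ Right moves to $(G^R,p+r)$ or, including the marker, to $(G^R,\widehat{p+r})$; if $r=\ell$ Right wins, the marker passes to Left, play continues at $(G^R,\widehat{p+r})$; if $r<\ell$ Left moves to $(G^L,p-\ell)$. A player who wins a bid but has no option loses. $o(G,\tilde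 p)\in\{\mathrm L,\mathrm R\}$ is the winner under optimal play; $\mathrm L>\mathrm R$. Disjunctive sum $G+H=\{G^{\mathcal L}+H,G+H^{\mathcal L}\mid G^{\mathcal R}+H,G+H^{\mathcal R}\}$. $G\ge H$ means $o(G+X,\tilde p)\ge o(H+X,\tilde p)$ for all game forms $X$ and all $\tilde p\in\mathcal B$; $G=H$ means $G\ge H$ and $H\ge G$. *)

theory Defs
  imports Main
begin

text \<open>Game forms: finite lists of Left and Right options (a list represents the
finite set of its elements; outcomes depend only on the set of options).\<close>
datatype game = Game "game list" "game list"

definition zero :: game where "zero = Game [] []"
definition one :: game where "one = Game [zero] []"

text \<open>Dyadic game forms: dy k = 1/2^k.\<close>
fun dy :: "nat \<Rightarrow> game" where
  "dy 0 = one"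
| "dy (Suc k) = Game [zero] [dy k]"

lemma size_mem_lt: "x \<in> set xs \<Longrightarrow> size x < Suc (size_list size xs + m) \<and> size x < Suc (m + size_list size xs)"
  by (induction xs) auto

function gplus :: "game \<Rightarrow> game \<Rightarrow> game" where
  "gplus (Game GL GR) (Game HL HR) =
     Game (map (\<lambda>g. gplus g (Game HL HR)) GL @ map (\<lambda>h. gplus (Game GL GR) h) HL)
          (map (\<lambda>g. gplus g (Game HL HR)) GR @ map (\<lambda>h. gplus (Game GL GR) h) HR)"
  by pat_completeness auto
termination
  by (relation "measure (\<lambda>(a,b). size a + size b)")
     (auto dest: size_mem_lt)

text \<open>lwins TB G p mk: Left wins (outcome L) from position (G, state) where Left holds
p dollars, Right holds TB - p; mk = True means Left holds the tie-breaking marker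
(state \<open>p-hat\<close>), mk = False means Right holds it (state p).
Left wins iff Left has a bid l such that for every Right bid r the resulting play is
won by Left; the winner of the bid chooses the option (and, where allowed, whether
to include the marker).  A bid winner without an option loses.\<close>
fun lwins :: "nat \<Rightarrow> game \<Rightarrow> nat \<Rightarrow> bool \<Rightarrow> bool" where
  "lwins TB (Game Ls Rs) p mk =
    (\<exists>l\<in>{0..p}. \<forall>r\<in>{0..TB - p}.
      (if mk then
         (if r < l then (\<exists>g\<in>set Ls. lwins TB g (p - l) True \<or> lwins TB g (p - l) False)
          else if l = r then (\<exists>g\<in>set Ls. lwins TB g (p - l) False)
          else (\<forall>g\<in>set Rs. lwins TB g (p + r) True))
       else
         (if l < r then (\<forall>g\<in>set Rs. lwins TB g (p + r) False \<and> lwins TB g (p + r) True)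
          else if l = r then (\<forall>g\<in>set Rs. lwins TB g (p + r) True)
          else (\<exists>g\<in>set Ls. lwins TB g (p - l) False))))"

datatype outcome = OR | OL

instantiation outcome :: linorder
begin
definition less_eq_outcome :: "outcome \<Rightarrow> outcome \<Rightarrow> bool" where
  "less_eq_outcome a b = (a = OR \<or> b = OL)"
definition less_outcome :: "outcome \<Rightarrow> outcome \<Rightarrow> bool" where
  "less_outcome a b = (a = OR \<and> b = OL)"
instance proof
  fix x y z :: outcome
  show "(x < y) = (x \<le> y \<and> \<not> y \<le> x)" "x \<le> x" "x \<le> y \<Longrightarrow> y \<le> z \<Longrightarrow> x \<le> z"
       "x \<le> y \<Longrightarrow> y \<le> x \<Longrightarrow> x = y" "x \<le> y \<or> y \<le> x"
    by (cases x; cases y; cases z; simp add: less_eq_outcome_def less_outcome_def)+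
qed
end

definition outc :: "nat \<Rightarrow> game \<Rightarrow> nat \<Rightarrow> bool \<Rightarrow> outcome" where
  "outc TB G p mk = (if lwins TB G p mk then OL else OR)"

definition game_ge :: "nat \<Rightarrow> game \<Rightarrow> game \<Rightarrow> bool" where
  "game_ge TB G H = (\<forall>X p mk. p \<le> TB \<longrightarrow> outc TB (gplus G X) p mk \<ge> outc TB (gplus H X) p mk)"

definition game_eq :: "nat \<Rightarrow> game \<Rightarrow> game \<Rightarrow> bool" where
  "game_eq TB G H = (game_ge TB G H \<and> game_ge TB H G)"

end

(*
  Call a relation S between positions (G at budget state (p, m)) and (H at (q, n)) a Left
  simulation if every Left move in G and every Right move in H can be answered on the other side,
  or by standing still there, along S-related positions, and the budget state of H is never worse
  for Left. By induction on the positions, Left then wins H whenever she wins G, copying her bids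
  from G. For a fixed game Y, comparing a single dyadic 1/2^j with a sum 1/2^a + 1/2^b by their
  numerical values yields Left simulations between Y + 1/2^j and Y + 1/2^a + 1/2^b in both
  directions; as numbers 1/2^k + 1/2^k = 1/2^(k-1), so Left wins in either sum iff in the other.
*)

theory Submission
  imports Defs Complex_Main "HOL-Library.Product_Lexorder"
begin

fun lopts :: "game \<Rightarrow> game set" where
  "lopts (Game L R) = set L"

fun ropts :: "game \<Rightarrow> game set" where
  "ropts (Game L R) = set R"

lemma size_lopts: "g \<in> lopts G \<Longrightarrow> size g < size G"
  by (cases G) (auto dest: size_mem_lt)

lemma size_ropts: "g \<in> ropts G \<Longrightarrow> size g < size G"
  by (cases G) (auto dest: size_mem_lt)

lemma gplus_zero_left [simp]: "gplus zero G = G"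
proof (induction G)
  case (Game Ls Rs)
  have "map (gplus zero) Ls = Ls" "map (gplus zero) Rs = Rs"
    using Game.IH by (simp_all add: map_idI)
  then show ?case
    by (simp add: zero_def)
qed

lemma gplus_zero_right [simp]: "gplus G zero = G"
proof (induction G)
  case (Game Ls Rs)
  have "map (\<lambda>g. gplus g zero) Ls = Ls" "map (\<lambda>g. gplus g zero) Rs = Rs"
    using Game.IH by (simp_all add: map_idI)
  then show ?case
    by (simp add: zero_def)
qed

lemma lopts_gplus: "lopts (gplus G H) = (\<lambda>g. gplus g H) ` lopts G \<union> gplus G ` lopts H"
  by (cases G; cases H) auto

lemma ropts_gplus: "ropts (gplus G H) = (\<lambda>g. gplus g H) ` ropts G \<union> gplus G ` ropts H"
  by (cases G; cases H) auto

lemma lopts_zero [simp]: "lopts zero = {}"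
  and ropts_zero [simp]: "ropts zero = {}"
  by (simp_all add: zero_def)

lemma lopts_dy: "lopts (dy a) = {zero}"
  by (cases a) (simp_all add: one_def)

lemma ropts_dy: "ropts (dy a) = (if a = 0 then {} else {dy (a - 1)})"
  by (cases a) (simp_all add: one_def)

section \<open>Bidding rounds\<close>

definition left_wins_bid :: "bool \<Rightarrow> nat \<Rightarrow> nat \<Rightarrow> bool" where
  "left_wins_bid mk l r \<longleftrightarrow> (if mk then r \<le> l else r < l)"

definition marker_after_left_win :: "bool \<Rightarrow> nat \<Rightarrow> nat \<Rightarrow> bool set" where
  "marker_after_left_win mk l r = (if mk \<and> r < l then UNIV else {False})"

definition marker_after_right_win :: "bool \<Rightarrow> nat \<Rightarrow> nat \<Rightarrow> bool set" where
  "marker_after_right_win mk l r = (if \<not> mk \<and> l < r then UNIV else {True})"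

definition bids_favour_left :: "nat \<Rightarrow> game set \<Rightarrow> game set \<Rightarrow> nat \<Rightarrow> bool \<Rightarrow> nat \<Rightarrow> nat \<Rightarrow> bool" where
  "bids_favour_left TB LS RS p mk l r \<longleftrightarrow>
     (if left_wins_bid mk l r then \<exists>g\<in>LS. \<exists>mk'\<in>marker_after_left_win mk l r. lwins TB g (p - l) mk'
      else \<forall>g\<in>RS. \<forall>mk'\<in>marker_after_right_win mk l r. lwins TB g (p + r) mk')"

definition left_wins_round :: "nat \<Rightarrow> game set \<Rightarrow> game set \<Rightarrow> nat \<Rightarrow> bool \<Rightarrow> bool" where
  "left_wins_round TB LS RS p mk \<longleftrightarrow> (\<exists>l\<le>p. \<forall>r\<le>TB - p. bids_favour_left TB LS RS p mk l r)"

lemma lwins_eq_left_wins_round: "lwins TB G p mk = left_wins_round TB (lopts G) (ropts G) p mk"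
proof (cases G)
  case (Game Ls Rs)
  show ?thesis
    unfolding Game lwins.simps[of TB Ls Rs] left_wins_round_def bids_favour_left_def
    by (simp only: Bex_def Ball_def atLeastAtMost_iff le0 simp_thms lopts.simps ropts.simps)
       (intro ex_cong1 all_cong1 conj_cong imp_cong refl;
        auto simp: left_wins_bid_def marker_after_left_win_def marker_after_right_win_def
          ex_bool_eq all_bool_eq)
qed

text \<open>Budget states \<open>(p, mk)\<close> are ordered lexicographically (with \<open>False < True\<close>): more
  money, and at equal money holding the marker, is better for Left.\<close>

context
  fixes TB :: nat and LA RA LB RB :: "game set" and p q :: nat and m n :: bool
  assumes state_le: "(p, m) \<le> (q, n)" and budget: "q \<le> TB"
    and left: "\<And>p' m' q' n'. (p', m') \<le> (q', n') \<Longrightarrow> (n' \<longrightarrow> m') \<Longrightarrow> (p', m') \<le> (q, n) \<Longrightarrow>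
      q' \<le> TB \<Longrightarrow> \<exists>g\<in>LA. lwins TB g p' m' \<Longrightarrow> \<exists>h\<in>LB. lwins TB h q' n'"
    and right: "\<And>p' m' q' n'. (p', m') \<le> (q', n') \<Longrightarrow> (n' \<longrightarrow> m') \<Longrightarrow> (p, m) \<le> (q', n') \<Longrightarrow>
      q' \<le> TB \<Longrightarrow> \<forall>g\<in>RA. lwins TB g p' m' \<Longrightarrow> \<forall>h\<in>RB. lwins TB h q' n'"
    and tie: "\<not> m \<Longrightarrow> n \<Longrightarrow> \<forall>g\<in>RA. lwins TB g p True \<Longrightarrow> \<exists>h\<in>LB. lwins TB h q False"
begin

lemma bids_favour_left_same_winner:
  assumes A: "bids_favour_left TB LA RA p m l r"
    and same: "left_wins_bid m l r = left_wins_bid n l r" and "l \<le> p" "r \<le> TB - q"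
  shows "bids_favour_left TB LB RB q n l r"
proof (cases "left_wins_bid n l r")
  case True
  then obtain m' where m': "m' \<in> marker_after_left_win m l r" "\<exists>g\<in>LA. lwins TB g (p - l) m'"
    using A same by (auto simp: bids_favour_left_def)
  have marker: "(m' \<and> n) \<in> marker_after_left_win n l r"
    using m'(1) True same
    by (auto simp: marker_after_left_win_def left_wins_bid_def split: if_splits)
  have "(p - l, m') \<le> (q - l, m' \<and> n)" "(p - l, m') \<le> (q, n)"
    using m'(1) state_le \<open>l \<le> p\<close> by (auto simp: marker_after_left_win_def split: if_splits)
  then have "\<exists>h\<in>LB. lwins TB h (q - l) (m' \<and> n)"
    using budget by (intro left[where p'="p - l" and m'=m'] m'(2)) auto
  then show ?thesis
    using True marker by (auto simp: bids_favour_left_def)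
next
  case False
  have "lwins TB h (q + r) n'" if "h \<in> RB" "n' \<in> marker_after_right_win n l r" for h n'
  proof -
    have "(m \<or> n') \<in> marker_after_right_win m l r"
      and "(p + r, m \<or> n') \<le> (q + r, n')" "(p, m) \<le> (q + r, n')"
      using that(2) state_le by (auto simp: marker_after_right_win_def split: if_splits)
    moreover have "\<forall>g\<in>RA. lwins TB g (p + r) (m \<or> n')"
      using A same False calculation(1) by (auto simp: bids_favour_left_def)
    ultimately show ?thesis
      using right[of "p + r" "m \<or> n'" "q + r" n'] that(1) \<open>r \<le> TB - q\<close> budget by auto
  qed
  then show ?thesis
    using False by (auto simp: bids_favour_left_def)
qed

lemma bids_favour_left_marker_lost:
  assumes A: "bids_favour_left TB LA RA p m l (l + 1)" and marker: m "\<not> n" and "l \<le> TB - q"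
  shows "bids_favour_left TB LB RB q n l l"
proof -
  have "p < q"
    using state_le marker by auto
  have "\<forall>g\<in>RA. lwins TB g (p + (l + 1)) True"
    using A marker by (simp add: bids_favour_left_def left_wins_bid_def marker_after_right_win_def)
  then have "\<forall>h\<in>RB. lwins TB h (q + l) True"
    by (rule right[rotated 4]) (use \<open>p < q\<close> \<open>l \<le> TB - q\<close> budget in auto)
  then show ?thesis
    using marker by (simp add: bids_favour_left_def left_wins_bid_def marker_after_right_win_def)
qed

text \<open>For \<open>l = 0\<close> the bid \<open>l - 1 = 0\<close> is a tie, which Right wins at \<open>(p, m)\<close>.\<close>

lemma bids_favour_left_marker_gained:
  assumes A: "bids_favour_left TB LA RA p m l (l - 1)" and marker: "\<not> m" n and "l \<le> p"
  shows "bids_favour_left TB LB RB q n l l"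
proof (cases "l = 0")
  case True
  then have "\<forall>g\<in>RA. lwins TB g p True"
    using A marker by (simp add: bids_favour_left_def left_wins_bid_def marker_after_right_win_def)
  then have "\<exists>h\<in>LB. lwins TB h q False"
    using tie marker by blast
  then show ?thesis
    using marker True
    by (simp add: bids_favour_left_def left_wins_bid_def marker_after_left_win_def)
next
  case False
  then have "\<exists>g\<in>LA. lwins TB g (p - l) False"
    using A marker by (simp add: bids_favour_left_def left_wins_bid_def marker_after_left_win_def)
  then have "\<exists>h\<in>LB. lwins TB h (q - l) False"
    by (rule left[rotated 4]) (use state_le \<open>l \<le> p\<close> budget in auto)
  then show ?thesis
    using marker by (simp add: bids_favour_left_def left_wins_bid_def marker_after_left_win_def)
qed

text \<open>Left bids at \<open>(q, n)\<close> what she bids at \<open>(p, m)\<close>. Right's bid \<open>r\<close> at \<open>(q, n)\<close> is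
  matched by the bid \<open>r\<close> at \<open>(p, m)\<close>, unless the two marker holders decide the tie
  \<open>r = l\<close> differently; then by \<open>l + 1\<close> or \<open>l - 1\<close>.\<close>

lemma left_wins_round_mono:
  assumes "left_wins_round TB LA RA p m"
  shows "left_wins_round TB LB RB q n"
proof -
  obtain l where "l \<le> p" and A: "\<And>r. r \<le> TB - p \<Longrightarrow> bids_favour_left TB LA RA p m l r"
    using assms by (auto simp: left_wins_round_def)
  have "bids_favour_left TB LB RB q n l r" if r: "r \<le> TB - q" for r
  proof -
    have "r \<le> TB - p"
      using r state_le by auto
    consider (same) "left_wins_bid m l r = left_wins_bid n l r" | (lost) m "\<not> n" "r = l"
      | (gained) "\<not> m" n "r = l"
      unfolding left_wins_bid_def by (cases m; cases n; cases "r = l") (auto simp: le_less)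
    then show ?thesis
    proof cases
      case same
      then show ?thesis
        using bids_favour_left_same_winner A \<open>l \<le> p\<close> r \<open>r \<le> TB - p\<close> by blast
    next
      case lost
      then have "l + 1 \<le> TB - p"
        using r state_le budget by auto
      then show ?thesis
        using bids_favour_left_marker_lost A lost r by blast
    next
      case gained
      then show ?thesis
        using bids_favour_left_marker_gained A[of "l - 1"] \<open>r \<le> TB - p\<close> \<open>l \<le> p\<close> by simp
    qed
  qed
  moreover have "l \<le> q"
    using \<open>l \<le> p\<close> state_le by auto
  ultimately show ?thesis
    unfolding left_wins_round_def by blast
qed

end

section \<open>Left simulations\<close>

text \<open>\<open>S G p m H q n\<close> is meant to transfer a Left win at \<open>(G, p, m)\<close> to \<open>(H, q, n)\<close>. Left
  moves in \<open>G\<close> and Right moves in \<open>H\<close> are answered by a move on the other side or by a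
  stutter step; \<open>marker_tie\<close> covers the tie \<open>0 = 0\<close>, won by Right at \<open>(p, m)\<close> but by Left
  at \<open>(q, n)\<close>.\<close>

locale left_simulation =
  fixes S :: "game \<Rightarrow> nat \<Rightarrow> bool \<Rightarrow> game \<Rightarrow> nat \<Rightarrow> bool \<Rightarrow> bool"
  assumes state_le: "S G p m H q n \<Longrightarrow> (p, m) \<le> (q, n)"
    and left_move: "S G p m H q n \<Longrightarrow> (p', m') \<le> (q', n') \<Longrightarrow> (n' \<longrightarrow> m') \<Longrightarrow> (p', m') \<le> (q, n) \<Longrightarrow>
      g \<in> lopts G \<Longrightarrow> S g p' m' H q n \<or> (\<exists>h\<in>lopts H. S g p' m' h q' n')"
    and right_move: "S G p m H q n \<Longrightarrow> (p', m') \<le> (q', n') \<Longrightarrow> (n' \<longrightarrow> m') \<Longrightarrow> (p, m) \<le> (q', n') \<Longrightarrow>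
      h \<in> ropts H \<Longrightarrow> S G p m h q' n' \<or> (\<exists>g\<in>ropts G. S g p' m' h q' n')"
    and marker_tie: "S G p m H q n \<Longrightarrow> \<not> m \<Longrightarrow> n \<Longrightarrow>
      (\<exists>g\<in>ropts G. S g p True H q n) \<or> (\<exists>h\<in>lopts H. S G p m h q False)"
begin

context
  fixes TB :: nat and G H :: game and p q :: nat and m n :: bool
  assumes related: "S G p m H q n" and budget: "q \<le> TB"
    and win: "lwins TB G p m" and lose: "\<not> lwins TB H q n"
    and smaller: "\<And>G' p' m' H' q' n'. size G' + size H' < size G + size H \<Longrightarrow> S G' p' m' H' q' n' \<Longrightarrow>
      q' \<le> TB \<Longrightarrow> lwins TB G' p' m' \<Longrightarrow> lwins TB H' q' n'"
begin

lemma left_options_transfer: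
  assumes "(p', m') \<le> (q', n')" "n' \<longrightarrow> m'" "(p', m') \<le> (q, n)" "q' \<le> TB"
    and "\<exists>g\<in>lopts G. lwins TB g p' m'"
  shows "\<exists>h\<in>lopts H. lwins TB h q' n'"
proof -
  obtain g where g: "g \<in> lopts G" "lwins TB g p' m'"
    using assms(5) by blast
  from left_move[OF related assms(1-3) g(1)] show ?thesis
  proof
    assume "S g p' m' H q n"
    from smaller[OF _ this budget g(2)] size_lopts[OF g(1)] lose show ?thesis
      by simp
  next
    assume "\<exists>h\<in>lopts H. S g p' m' h q' n'"
    then show ?thesis
      using smaller size_lopts g \<open>q' \<le> TB\<close> by (meson add_strict_mono)
  qed
qed

lemma right_options_transfer:
  assumes "(p', m') \<le> (q', n')" "n' \<longrightarrow> m'" "(p, m) \<le> (q', n')" "q' \<le> TB"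
    and RG: "\<forall>g\<in>ropts G. lwins TB g p' m'"
  shows "\<forall>h\<in>ropts H. lwins TB h q' n'"
proof
  fix h
  assume h: "h \<in> ropts H"
  from right_move[OF related assms(1-3) h] show "lwins TB h q' n'"
  proof
    assume "S G p m h q' n'"
    from smaller[OF _ this \<open>q' \<le> TB\<close> win] size_ropts[OF h] show ?thesis
      by simp
  next
    assume "\<exists>g\<in>ropts G. S g p' m' h q' n'"
    then show ?thesis
      using smaller size_ropts h RG \<open>q' \<le> TB\<close> by (meson add_strict_mono)
  qed
qed

lemma marker_tie_transfer:
  assumes "\<not> m" n and RG: "\<forall>g\<in>ropts G. lwins TB g p True"
  shows "\<exists>h\<in>lopts H. lwins TB h q False"
  using marker_tie[OF related assms(1,2)]
proof
  assume "\<exists>g\<in>ropts G. S g p True H q n"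
  then have "lwins TB H q n"
    using smaller size_ropts RG budget by fastforce
  with lose show ?thesis ..
next
  assume "\<exists>h\<in>lopts H. S G p m h q False"
  then obtain h where "h \<in> lopts H" "S G p m h q False" ..
  from smaller[OF _ this(2) budget win] size_lopts[OF this(1)] show ?thesis
    using \<open>h \<in> lopts H\<close> by auto
qed

end

lemma lwins_transfer: "S G p m H q n \<Longrightarrow> q \<le> TB \<Longrightarrow> lwins TB G p m \<Longrightarrow> lwins TB H q n"
proof (induction "size G + size H" arbitrary: G p m H q n rule: less_induct)
  case less
  have smaller: "lwins TB H' q' n'" if "size G' + size H' < size G + size H" "S G' p' m' H' q' n'"
    "q' \<le> TB" "lwins TB G' p' m'" for G' p' m' H' q' n'
    using less.hyps that by blast
  show ?case
  proof (rule ccontr)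
    assume lose: "\<not> lwins TB H q n"
    note transfer = left_options_transfer right_options_transfer marker_tie_transfer
    have "left_wins_round TB (lopts H) (ropts H) q n"
      by (rule left_wins_round_mono[OF state_le[OF less.prems(1)] less.prems(2)])
        (use transfer[OF less.prems lose smaller] less.prems(3) in
          \<open>auto simp: lwins_eq_left_wins_round\<close>)
    with lose show False
      by (simp add: lwins_eq_left_wins_round)
  qed
qed

end

section \<open>Sums of dyadics\<close>

lemma length_le_2_cases [consumes 1, case_names Nil single pair]:
  assumes "length xs \<le> 2" "xs = [] \<Longrightarrow> P" "\<And>a. xs = [a] \<Longrightarrow> P" "\<And>a b. xs = [a, b] \<Longrightarrow> P"
  shows P
  using assms by (cases xs; cases "tl xs") auto

lemma half_power_pred: "0 < a \<Longrightarrow> (1/2::real) ^ (a - 1) = 2 * (1/2) ^ a"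
  by (cases a) auto

lemma half_power_le_add:
  assumes "(1/2::real) ^ j \<le> (1/2) ^ c + (1/2) ^ d"
  shows "c \<le> j \<or> d \<le> j \<or> c = Suc j \<and> d = Suc j"
proof (rule ccontr)
  assume "\<not> ?thesis"
  then have "Suc (Suc j) \<le> c \<and> Suc j \<le> d \<or> Suc j \<le> c \<and> Suc (Suc j) \<le> d"
    by auto
  moreover have anti: "(1/2::real) ^ a \<le> (1/2) ^ b" if "b \<le> a" for a b
    using that by simp
  ultimately have "(1/2::real) ^ c + (1/2) ^ d \<le> (1/2) ^ Suc (Suc j) + (1/2) ^ Suc j"
    by (metis add.commute add_mono anti)
  also have "\<dots> < (1/2) ^ j"
    by simp
  finally show False
    using assms by simp
qed

definition dysum :: "nat list \<Rightarrow> game" where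
  "dysum xs = foldr (\<lambda>a G. gplus (dy a) G) xs zero"

fun dy_lopts :: "nat list \<Rightarrow> nat list set" where
  "dy_lopts [] = {}"
| "dy_lopts (a # as) = insert as ((#) a ` dy_lopts as)"

fun dy_ropts :: "nat list \<Rightarrow> nat list set" where
  "dy_ropts [] = {}"
| "dy_ropts (a # as) = (if a = 0 then {} else {(a - 1) # as}) \<union> (#) a ` dy_ropts as"

lemma dysum_Nil [simp]: "dysum [] = zero"
  and dysum_Cons [simp]: "dysum (a # as) = gplus (dy a) (dysum as)"
  by (simp_all add: dysum_def)

lemma lopts_dysum: "lopts (dysum xs) = dysum ` dy_lopts xs"
  by (induction xs) (auto simp: lopts_gplus lopts_dy image_image)

lemma ropts_dysum: "ropts (dysum xs) = dysum ` dy_ropts xs"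
  by (induction xs) (auto simp: ropts_gplus ropts_dy image_image)

lemma length_dy_lopts: "z \<in> dy_lopts xs \<Longrightarrow> Suc (length z) = length xs"
  by (induction xs arbitrary: z) auto

lemma length_dy_ropts: "z \<in> dy_ropts xs \<Longrightarrow> length z = length xs"
  by (induction xs arbitrary: z) (auto split: if_splits)

definition dyval :: "nat list \<Rightarrow> real" where
  "dyval xs = (\<Sum>a\<leftarrow>xs. (1/2) ^ a)"

lemma dyval_Nil [simp]: "dyval [] = 0"
  and dyval_Cons [simp]: "dyval (a # as) = (1/2) ^ a + dyval as"
  by (simp_all add: dyval_def)

lemma dyval_nonneg: "0 \<le> dyval xs"
  by (induction xs) auto

lemma dyval_pos: "xs \<noteq> [] \<Longrightarrow> 0 < dyval xs"
  by (cases xs) (auto intro: add_pos_nonneg dyval_nonneg)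

lemma dyval_dy_lopts_less: "z \<in> dy_lopts xs \<Longrightarrow> dyval z < dyval xs"
  by (induction xs arbitrary: z) auto

lemma dyval_dy_ropts_greater: "z \<in> dy_ropts xs \<Longrightarrow> dyval xs < dyval z"
  by (induction xs arbitrary: z) (auto split: if_splits)

lemma dyval_right_move_of_pair:
  assumes "length xs \<le> 1" "length ys \<le> 2" "dyval xs \<le> dyval ys" "z \<in> dy_ropts ys"
  shows "(\<exists>w\<in>dy_lopts z. dyval xs \<le> dyval w) \<or> (\<exists>x'\<in>dy_ropts xs. dyval x' \<le> dyval z)"
proof (cases xs)
  case Nil
  obtain a as where "z = a # as"
    using length_dy_ropts[OF assms(4)] assms(4) by (cases z; cases ys) auto
  then show ?thesis
    using Nil dyval_nonneg by auto
next
  case (Cons j xs')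
  then have xs: "xs = [j]"
    using assms(1) by simp
  from assms(2) show ?thesis
  proof (cases rule: length_le_2_cases)
    case Nil
    then show ?thesis using assms(4) by simp
  next
    case (single a)
    then have "0 < a" "z = [a - 1]" "a \<le> j"
      using assms(3,4) xs by (auto split: if_splits)
    then have "[j - 1] \<in> dy_ropts xs" "dyval [j - 1] \<le> dyval z"
      using xs by auto
    then show ?thesis by blast
  next
    case (pair a b)
    have key: "\<exists>w\<in>dy_lopts [c - 1, d]. dyval xs \<le> dyval w"
      if "(1/2::real) ^ j \<le> (1/2) ^ c + (1/2) ^ d" for c d
      using half_power_le_add[OF that] xs by auto
    have "(1/2::real) ^ j \<le> (1/2) ^ a + (1/2) ^ b"
      using assms(3) xs pair by simp
    then have "\<exists>w\<in>dy_lopts z. dyval xs \<le> dyval w"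
      using assms(4) pair key[of a b] key[of b a]
      by (auto simp: add.commute insert_commute split: if_splits)
    then show ?thesis ..
  qed
qed

lemma dyval_right_move_of_single:
  assumes "length xs \<le> 1" "length ys \<le> 2" "ys \<noteq> []" "dyval ys \<le> dyval xs" "x' \<in> dy_ropts xs"
  shows "\<exists>z\<in>dy_ropts ys. dyval z \<le> dyval x'"
proof -
  obtain j where xs: "xs = [j]" and "0 < j" and x': "x' = [j - 1]"
    using assms(1,5) by (cases xs) (auto split: if_splits)
  from assms(2,3) show ?thesis
  proof (cases rule: length_le_2_cases)
    case (single a)
    then have "j \<le> a"
      using assms(4) xs by simp
    then have "[a - 1] \<in> dy_ropts ys" "dyval [a - 1] \<le> dyval x'"
      using single \<open>0 < j\<close> x' by auto
    then show ?thesis by blast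
  next
    case (pair a b)
    have sum: "(1/2::real) ^ a + (1/2) ^ b \<le> (1/2) ^ j"
      using assms(4) xs pair by simp
    moreover have "(0::real) < (1/2) ^ b"
      by simp
    ultimately have "(1/2::real) ^ a < (1/2) ^ j"
      by linarith
    then have "0 < a"
      by simp
    have "dyval [a - 1, b] = 2 * (1/2) ^ a + (1/2) ^ b" "dyval x' = 2 * (1/2) ^ j"
      using half_power_pred[OF \<open>0 < a\<close>] half_power_pred[OF \<open>0 < j\<close>] x' by simp_all
    with sum \<open>(0::real) < (1/2) ^ b\<close> have "dyval [a - 1, b] \<le> dyval x'"
      by linarith
    moreover have "[a - 1, b] \<in> dy_ropts ys"
      using pair \<open>0 < a\<close> by simp
    ultimately show ?thesis by blast
  qed simp
qed

lemma dyval_left_move_of_pair: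
  assumes "length xs \<le> 1" "length ys \<le> 2" "dyval ys \<le> dyval xs" "z \<in> dy_lopts ys" "z \<noteq> []"
  shows "\<exists>w\<in>dy_ropts z. dyval w \<le> dyval xs"
proof -
  obtain a b where ys: "ys = [a, b]"
    using assms(2,4,5) by (cases rule: length_le_2_cases) auto
  then obtain j where xs: "xs = [j]"
    using assms(1,3) dyval_pos[of ys] by (cases xs) auto
  have key: "\<exists>w\<in>dy_ropts [d]. dyval w \<le> dyval xs"
    if "(1/2::real) ^ c + (1/2) ^ d \<le> (1/2) ^ j" for c d
  proof -
    have "(0::real) < (1/2) ^ c"
      by simp
    with that have "(1/2::real) ^ d < (1/2) ^ j"
      by linarith
    then have "j < d"
      by simp
    then have "[d - 1] \<in> dy_ropts [d]" "dyval [d - 1] \<le> dyval xs"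
      using xs by auto
    then show ?thesis by blast
  qed
  show ?thesis
    using assms(3,4) xs ys key[of a b] key[of b a] by (auto simp: add.commute)
qed

section \<open>Comparing a dyadic with a sum of two dyadics\<close>

text \<open>The last clause of each relation supplies the move required by
  \<open>marker_tie\<close>; an empty \<open>ys\<close> is covered by \<open>single_below_pair\<close> alone.\<close>

definition single_below_pair :: "game \<Rightarrow> nat \<Rightarrow> bool \<Rightarrow> game \<Rightarrow> nat \<Rightarrow> bool \<Rightarrow> bool" where
  "single_below_pair G p m H q n \<longleftrightarrow> (\<exists>xs ys Y. G = gplus (dysum xs) Y \<and> H = gplus (dysum ys) Y \<and>
     length xs \<le> 1 \<and> length ys \<le> 2 \<and> dyval xs \<le> dyval ys \<and> (p, m) \<le> (q, n) \<and>
     (\<not> m \<and> n \<longrightarrow> (\<exists>w\<in>dy_lopts ys. dyval xs \<le> dyval w)))"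

definition pair_below_single :: "game \<Rightarrow> nat \<Rightarrow> bool \<Rightarrow> game \<Rightarrow> nat \<Rightarrow> bool \<Rightarrow> bool" where
  "pair_below_single G p m H q n \<longleftrightarrow> (\<exists>xs ys Y. G = gplus (dysum ys) Y \<and> H = gplus (dysum xs) Y \<and>
     length xs \<le> 1 \<and> length ys \<le> 2 \<and> ys \<noteq> [] \<and> dyval ys \<le> dyval xs \<and> (p, m) \<le> (q, n) \<and>
     (\<not> m \<and> n \<longrightarrow> (\<exists>w\<in>dy_ropts ys. dyval w \<le> dyval xs)))"

lemma single_below_pairI:
  "length xs \<le> 1 \<Longrightarrow> length ys \<le> 2 \<Longrightarrow> dyval xs \<le> dyval ys \<Longrightarrow> (p, m) \<le> (q, n) \<Longrightarrow>
   (\<not> m \<and> n \<longrightarrow> (\<exists>w\<in>dy_lopts ys. dyval xs \<le> dyval w)) \<Longrightarrow>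
   single_below_pair (gplus (dysum xs) Y) p m (gplus (dysum ys) Y) q n"
  unfolding single_below_pair_def by blast

lemma pair_below_singleI:
  "length xs \<le> 1 \<Longrightarrow> length ys \<le> 2 \<Longrightarrow> ys \<noteq> [] \<Longrightarrow> dyval ys \<le> dyval xs \<Longrightarrow> (p, m) \<le> (q, n) \<Longrightarrow>
   (\<not> m \<and> n \<longrightarrow> (\<exists>w\<in>dy_ropts ys. dyval w \<le> dyval xs)) \<Longrightarrow>
   pair_below_single (gplus (dysum ys) Y) p m (gplus (dysum xs) Y) q n"
  unfolding pair_below_single_def by blast

lemma lopts_gplus_dysumE:
  assumes "g \<in> lopts (gplus (dysum xs) Y)"
  obtains (dyadic) z where "z \<in> dy_lopts xs" "g = gplus (dysum z) Y"
  | (summand) y where "y \<in> lopts Y" "g = gplus (dysum xs) y"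
  using assms by (auto simp: lopts_gplus lopts_dysum)

lemma ropts_gplus_dysumE:
  assumes "g \<in> ropts (gplus (dysum xs) Y)"
  obtains (dyadic) z where "z \<in> dy_ropts xs" "g = gplus (dysum z) Y"
  | (summand) y where "y \<in> ropts Y" "g = gplus (dysum xs) y"
  using assms by (auto simp: ropts_gplus ropts_dysum)

lemma single_below_pair_left:
  assumes "single_below_pair G p m H q n" "(p', m') \<le> (q', n')" "n' \<longrightarrow> m'" "g \<in> lopts G"
  shows "\<exists>h\<in>lopts H. single_below_pair g p' m' h q' n'"
proof -
  obtain xs ys Y where G: "G = gplus (dysum xs) Y" and H: "H = gplus (dysum ys) Y"
    and len: "length xs \<le> 1" "length ys \<le> 2" and val: "dyval xs \<le> dyval ys"
    using assms(1) unfolding single_below_pair_def by blast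
  from assms(4)[unfolded G] show ?thesis
  proof (cases rule: lopts_gplus_dysumE)
    case (dyadic z)
    then have "z = []" "xs \<noteq> []"
      using length_dy_lopts[of z xs] len by (auto simp flip: length_0_conv)
    then have "ys \<noteq> []"
      using val dyval_pos[of xs] by auto
    then obtain z' where z': "z' \<in> dy_lopts ys"
      by (cases ys) auto
    have "single_below_pair (gplus (dysum z) Y) p' m' (gplus (dysum z') Y) q' n'"
      by (rule single_below_pairI)
        (use \<open>z = []\<close> len assms(2,3) length_dy_lopts[OF z'] dyval_nonneg in auto)
    then show ?thesis
      using dyadic z' H by (auto simp: lopts_gplus lopts_dysum)
  next
    case (summand y)
    have "single_below_pair (gplus (dysum xs) y) p' m' (gplus (dysum ys) y) q' n'"
      by (rule single_below_pairI) (use len val assms(2,3) in auto)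
    then show ?thesis
      using summand H by (auto simp: lopts_gplus)
  qed
qed

lemma single_below_pair_right:
  assumes "single_below_pair G p m H q n" "(p', m') \<le> (q', n')" "n' \<longrightarrow> m'" "(p, m) \<le> (q', n')"
    and "h \<in> ropts H"
  shows "single_below_pair G p m h q' n' \<or> (\<exists>g\<in>ropts G. single_below_pair g p' m' h q' n')"
proof -
  obtain xs ys Y where G: "G = gplus (dysum xs) Y" and H: "H = gplus (dysum ys) Y"
    and len: "length xs \<le> 1" "length ys \<le> 2" and val: "dyval xs \<le> dyval ys"
    using assms(1) unfolding single_below_pair_def by blast
  from assms(5)[unfolded H] show ?thesis
  proof (cases rule: ropts_gplus_dysumE)
    case (dyadic z)
    have z: "length z \<le> 2" "dyval xs \<le> dyval z"
      using length_dy_ropts[OF dyadic(1)] dyval_dy_ropts_greater[OF dyadic(1)] len val by auto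
    show ?thesis
    proof (cases "\<not> m \<and> n' \<longrightarrow> (\<exists>w\<in>dy_lopts z. dyval xs \<le> dyval w)")
      case True
      have "single_below_pair (gplus (dysum xs) Y) p m (gplus (dysum z) Y) q' n'"
        by (rule single_below_pairI) (use len z assms(4) True in auto)
      then show ?thesis
        using G dyadic by simp
    next
      case False
      then obtain x' where x': "x' \<in> dy_ropts xs" "dyval x' \<le> dyval z"
        using dyval_right_move_of_pair[OF len val dyadic(1)] by blast
      have "single_below_pair (gplus (dysum x') Y) p' m' (gplus (dysum z) Y) q' n'"
        by (rule single_below_pairI)
          (use len z x' length_dy_ropts[OF x'(1)] assms(2,3) False in auto)
      then show ?thesis
        using G dyadic x'(1) by (auto simp: ropts_gplus ropts_dysum)
    qed
  next
    case (summand y)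
    have "single_below_pair (gplus (dysum xs) y) p' m' (gplus (dysum ys) y) q' n'"
      by (rule single_below_pairI) (use len val assms(2,3) in auto)
    then show ?thesis
      using summand G by (auto simp: ropts_gplus)
  qed
qed

lemma single_below_pair_tie:
  assumes "single_below_pair G p m H q n" "\<not> m" n
  shows "\<exists>h\<in>lopts H. single_below_pair G p m h q False"
proof -
  obtain xs ys Y w where G: "G = gplus (dysum xs) Y" and H: "H = gplus (dysum ys) Y"
    and len: "length xs \<le> 1" "length ys \<le> 2" and "(p, m) \<le> (q, n)"
    and w: "w \<in> dy_lopts ys" "dyval xs \<le> dyval w"
    using assms unfolding single_below_pair_def by blast
  have "single_below_pair (gplus (dysum xs) Y) p m (gplus (dysum w) Y) q False"
    by (rule single_below_pairI)
      (use len w length_dy_lopts[OF w(1)] \<open>(p, m) \<le> (q, n)\<close> assms(2) in auto)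
  then show ?thesis
    using G H w(1) by (auto simp: lopts_gplus lopts_dysum)
qed

lemma pair_below_single_left:
  assumes "pair_below_single G p m H q n" "(p', m') \<le> (q', n')" "n' \<longrightarrow> m'" "(p', m') \<le> (q, n)"
    and "g \<in> lopts G"
  shows "pair_below_single g p' m' H q n \<or>
    (\<exists>h\<in>lopts H. single_below_pair g p' m' h q' n' \<or> pair_below_single g p' m' h q' n')"
proof -
  obtain xs ys Y where G: "G = gplus (dysum ys) Y" and H: "H = gplus (dysum xs) Y"
    and len: "length xs \<le> 1" "length ys \<le> 2" "ys \<noteq> []" and val: "dyval ys \<le> dyval xs"
    using assms(1) unfolding pair_below_single_def by blast
  from assms(5)[unfolded G] show ?thesis
  proof (cases rule: lopts_gplus_dysumE)
    case (dyadic z)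
    show ?thesis
    proof (cases "z = []")
      case True
      obtain j where "xs = [j]"
        using len(1,3) val dyval_pos[of ys] by (cases xs) auto
      have "single_below_pair (gplus (dysum z) Y) p' m' (gplus (dysum []) Y) q' n'"
        by (rule single_below_pairI) (use True assms(2,3) in auto)
      then show ?thesis
        using dyadic H \<open>xs = [j]\<close> by (auto simp: lopts_gplus lopts_dy)
    next
      case False
      have "pair_below_single (gplus (dysum z) Y) p' m' (gplus (dysum xs) Y) q n"
        by (rule pair_below_singleI)
          (use False len val assms(4) length_dy_lopts[OF dyadic(1)]
            dyval_dy_lopts_less[OF dyadic(1)] dyval_left_move_of_pair[OF len(1,2) val dyadic(1) False] in auto)
      then show ?thesis
        using dyadic H by simp
    qed
  next
    case (summand y)
    have "pair_below_single (gplus (dysum ys) y) p' m' (gplus (dysum xs) y) q' n'"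
      by (rule pair_below_singleI) (use len val assms(2,3) in auto)
    then show ?thesis
      using summand H by (auto simp: lopts_gplus)
  qed
qed

lemma pair_below_single_right:
  assumes "pair_below_single G p m H q n" "(p', m') \<le> (q', n')" "n' \<longrightarrow> m'" "h \<in> ropts H"
  shows "\<exists>g\<in>ropts G. pair_below_single g p' m' h q' n'"
proof -
  obtain xs ys Y where G: "G = gplus (dysum ys) Y" and H: "H = gplus (dysum xs) Y"
    and len: "length xs \<le> 1" "length ys \<le> 2" "ys \<noteq> []" and val: "dyval ys \<le> dyval xs"
    using assms(1) unfolding pair_below_single_def by blast
  from assms(4)[unfolded H] show ?thesis
  proof (cases rule: ropts_gplus_dysumE)
    case (dyadic x')
    obtain z where z: "z \<in> dy_ropts ys" "dyval z \<le> dyval x'"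
      using dyval_right_move_of_single[OF len val dyadic(1)] by blast
    have "pair_below_single (gplus (dysum z) Y) p' m' (gplus (dysum x') Y) q' n'"
      by (rule pair_below_singleI)
        (use z len length_dy_ropts[OF z(1)] length_dy_ropts[OF dyadic(1)] assms(2,3) in auto)
    then show ?thesis
      using dyadic G z(1) by (auto simp: ropts_gplus ropts_dysum)
  next
    case (summand y)
    have "pair_below_single (gplus (dysum ys) y) p' m' (gplus (dysum xs) y) q' n'"
      by (rule pair_below_singleI) (use len val assms(2,3) in auto)
    then show ?thesis
      using summand G by (auto simp: ropts_gplus)
  qed
qed

lemma pair_below_single_tie:
  assumes "pair_below_single G p m H q n" "\<not> m" n
  shows "\<exists>g\<in>ropts G. pair_below_single g p True H q n"
proof -
  obtain xs ys Y w where G: "G = gplus (dysum ys) Y" and H: "H = gplus (dysum xs) Y"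
    and len: "length xs \<le> 1" "length ys \<le> 2" "ys \<noteq> []" and "(p, m) \<le> (q, n)"
    and w: "w \<in> dy_ropts ys" "dyval w \<le> dyval xs"
    using assms unfolding pair_below_single_def by blast
  have "pair_below_single (gplus (dysum w) Y) p True (gplus (dysum xs) Y) q n"
    by (rule pair_below_singleI)
      (use len w length_dy_ropts[OF w(1)] \<open>(p, m) \<le> (q, n)\<close> assms(2,3) in auto)
  then show ?thesis
    using G H w(1) by (auto simp: ropts_gplus ropts_dysum)
qed

definition dyadic_below :: "game \<Rightarrow> nat \<Rightarrow> bool \<Rightarrow> game \<Rightarrow> nat \<Rightarrow> bool \<Rightarrow> bool" where
  "dyadic_below G p m H q n \<longleftrightarrow> single_below_pair G p m H q n \<or> pair_below_single G p m H q n"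

interpretation dyadic: left_simulation dyadic_below
proof
  fix G p m H q n
  assume "dyadic_below G p m H q n"
  then show "(p, m) \<le> (q, n)"
    unfolding dyadic_below_def single_below_pair_def pair_below_single_def by blast
next
  fix G p m H q n p' m' q' n' g
  assume "dyadic_below G p m H q n"
    and moves: "(p', m') \<le> (q', n')" "n' \<longrightarrow> m'" "(p', m') \<le> (q, n)" and g: "g \<in> lopts G"
  then show "dyadic_below g p' m' H q n \<or> (\<exists>h\<in>lopts H. dyadic_below g p' m' h q' n')"
    using single_below_pair_left[OF _ moves(1,2) g] pair_below_single_left[OF _ moves g]
    unfolding dyadic_below_def by blast
next
  fix G p m H q n p' m' q' n' h
  assume "dyadic_below G p m H q n"
    and moves: "(p', m') \<le> (q', n')" "n' \<longrightarrow> m'" "(p, m) \<le> (q', n')" and h: "h \<in> ropts H"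
  then show "dyadic_below G p m h q' n' \<or> (\<exists>g\<in>ropts G. dyadic_below g p' m' h q' n')"
    using single_below_pair_right[OF _ moves h] pair_below_single_right[OF _ moves(1,2) h]
    unfolding dyadic_below_def by blast
next
  fix G p m H q n
  assume "dyadic_below G p m H q n" and tie: "\<not> m" n
  then show "(\<exists>g\<in>ropts G. dyadic_below g p True H q n) \<or> (\<exists>h\<in>lopts H. dyadic_below G p m h q False)"
    using single_below_pair_tie[OF _ tie] pair_below_single_tie[OF _ tie]
    unfolding dyadic_below_def by blast
qed

theorem mainTheorem18:
  fixes TB k :: nat
  assumes "k \<ge> 1"
  shows "game_eq TB (gplus (dy k) (dy k)) (dy (k - 1))"
proof -
  have val: "dyval [k - 1] = dyval [k, k]"
    using half_power_pred[of k] assms by simp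
  have up: "dyadic_below (gplus (dy (k - 1)) X) p m (gplus (gplus (dy k) (dy k)) X) p m"
    and down: "dyadic_below (gplus (gplus (dy k) (dy k)) X) p m (gplus (dy (k - 1)) X) p m"
    for X p m
    using single_below_pairI[of "[k - 1]" "[k, k]"] pair_below_singleI[of "[k - 1]" "[k, k]"] val
    unfolding dyadic_below_def by simp_all
  show ?thesis
    unfolding game_eq_def game_ge_def outc_def less_eq_outcome_def
    using dyadic.lwins_transfer[OF up] dyadic.lwins_transfer[OF down] by auto
qed

end
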